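(* Let $\alpha,\beta\in\mathbb N^N$ with $\alpha_j\le\beta_j$ for all $j$, and let $S:\beta/\alpha\to\mathbb N$ be a row strict tableau. Let $I\subseteq[N]$ be the set of rows of $S$ containing a $0$, and let $T$ be the row strict tableau of shape $\beta/(\alpha+\varepsilon_I)$ with entries in $\mathbb Z_+$ obtained by deleting all zeros from $S$. Then \[ h_{w_0}(T)=h_{w_0}(S)-h_I(\alpha). \]
   Context: Row shapes: for $\alpha,\beta\in\mathbb Z^N$ with $\alpha_j\le\beta_j$, row $j$ of $\beta/\alpha$ consists of boxes with $x$-coordinates $\alpha_j+1,\dots,\beta_j$; boxes at $x$-coordinates $\alpha_j$ and $\beta_j+1$ are said to be adjacent to the left and right ends of row $j$. A $w_0$-triple is $(u,v,w)$ with $v$ a box in row $r$, $u,w$ each a box of or adjacent to a row $j>r$, with $x$-coordinates $i_u=i_v$, $i_w=i_v+1$. A row strict tableau $S:\beta/\alpha\to\mathcal A$ ($\mathcal A$ totally ordered) is strictly increasing along rows. A $w_0$-triple is increasing in $S$ if $S(u)<S(v)<S(w)$, with the conventions $S(u)=-\infty$ if $u$ is adjacent to the left end of a row and $S(w)=+\infty$ if $w$ is adjacent to the right end; $h_{w_0}(S)$ is the number of increasing $w_0$-triples. $\varepsilon_I=\sum_{i\in I}\varepsilon_i$, and $h_I(\alpha)=|\{(r,s):1\le r<s\le N,\ r\in I,\ s\notin I,\ \alpha_s=\alpha_r+1\}|$. *)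

theory Defs
  imports Main
begin

text \<open>Rows are indexed by 1..N. A composition is a function nat => nat (only values on 1..N matter).
  A tableau is a function S :: nat => nat => 'a, where S j x is the entry of the box in row j
  with x-coordinate x.\<close>

definition is_box :: "(nat \<Rightarrow> nat) \<Rightarrow> (nat \<Rightarrow> nat) \<Rightarrow> nat \<Rightarrow> nat \<Rightarrow> bool" where
  "is_box \<alpha> \<beta> j x \<longleftrightarrow> \<alpha> j < x \<and> x \<le> \<beta> j"

definition row_strict :: "nat \<Rightarrow> (nat \<Rightarrow> nat) \<Rightarrow> (nat \<Rightarrow> nat) \<Rightarrow> (nat \<Rightarrow> nat \<Rightarrow> 'a::linorder) \<Rightarrow> bool" where
  "row_strict N \<alpha> \<beta> S \<longleftrightarrow>
     (\<forall>j\<in>{1..N}. \<forall>x y. \<alpha> j < x \<longrightarrow> x < y \<longrightarrow> y \<le> \<beta> j \<longrightarrow> S j x < S j y)"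

text \<open>w0-triples: (r, x, j) encodes v = box (r,x), u = (j,x), w = (j,x+1), with r < j,
  v a box of row r, and u, w boxes of or adjacent to row j, i.e. alpha j <= x <= beta j.\<close>

definition w0_triples :: "nat \<Rightarrow> (nat \<Rightarrow> nat) \<Rightarrow> (nat \<Rightarrow> nat) \<Rightarrow> (nat \<times> nat \<times> nat) set" where
  "w0_triples N \<alpha> \<beta> = {(r, x, j). r \<in> {1..N} \<and> j \<in> {1..N} \<and> r < j \<and>
      is_box \<alpha> \<beta> r x \<and> \<alpha> j \<le> x \<and> x \<le> \<beta> j}"

text \<open>Increasing: S(u) < S(v) < S(w), with S(u) = -infinity when u is adjacent to the left end
  (x = alpha j) and S(w) = +infinity when w is adjacent to the right end (x + 1 = beta j + 1).\<close>

definition increasing_triple ::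
  "(nat \<Rightarrow> nat) \<Rightarrow> (nat \<Rightarrow> nat) \<Rightarrow> (nat \<Rightarrow> nat \<Rightarrow> 'a::linorder) \<Rightarrow> nat \<times> nat \<times> nat \<Rightarrow> bool" where
  "increasing_triple \<alpha> \<beta> S t = (case t of (r, x, j) \<Rightarrow>
      (x = \<alpha> j \<or> S j x < S r x) \<and> (x = \<beta> j \<or> S r x < S j (x + 1)))"

definition h_w0 :: "nat \<Rightarrow> (nat \<Rightarrow> nat) \<Rightarrow> (nat \<Rightarrow> nat) \<Rightarrow> (nat \<Rightarrow> nat \<Rightarrow> 'a::linorder) \<Rightarrow> nat" where
  "h_w0 N \<alpha> \<beta> S = card {t \<in> w0_triples N \<alpha> \<beta>. increasing_triple \<alpha> \<beta> S t}"

definition h_I :: "nat \<Rightarrow> nat set \<Rightarrow> (nat \<Rightarrow> nat) \<Rightarrow> nat" where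
  "h_I N I \<alpha> = card {(r, s). 1 \<le> r \<and> r < s \<and> s \<le> N \<and> r \<in> I \<and> s \<notin> I \<and> \<alpha> s = \<alpha> r + 1}"

definition add_eps :: "(nat \<Rightarrow> nat) \<Rightarrow> nat set \<Rightarrow> nat \<Rightarrow> nat" where
  "add_eps \<alpha> I = (\<lambda>j. if j \<in> I then \<alpha> j + 1 else \<alpha> j)"

end

theory Submission
  imports Defs
begin

text \<open>Since the entries of S are natural numbers and rows strictly increase, a zero of S can
  only sit in the first box of its row; so the rows in I lose exactly their first box and the
  remaining boxes carry the same, positive, entries. Hence a w0-triple whose middle box v is
  not a deleted zero is increasing in S iff it is a w0-triple of the new shape that is increasing
  in T. A triple whose v is the deleted zero of row r is increasing iff u is adjacent to the left
  end of a row s > r with x-coordinate \<alpha> r + 1, and w is either adjacent to the right end of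
  that row or holds a positive entry, i.e. s is not in I; these triples are counted by h_I.\<close>

lemma increasing_triple_cong:
  assumes "t \<in> w0_triples N \<alpha> \<beta>"
    and "\<And>j x. j \<in> {1..N} \<Longrightarrow> is_box \<alpha> \<beta> j x \<Longrightarrow> S j x = T j x"
  shows "increasing_triple \<alpha> \<beta> S t \<longleftrightarrow> increasing_triple \<alpha> \<beta> T t"
proof -
  obtain r x j where t: "t = (r, x, j)" and "r \<in> {1..N}" "j \<in> {1..N}"
    "is_box \<alpha> \<beta> r x" "\<alpha> j \<le> x" "x \<le> \<beta> j"
    using assms(1) unfolding w0_triples_def by auto
  then have "S r x = T r x" "x \<noteq> \<alpha> j \<Longrightarrow> S j x = T j x"
    "x \<noteq> \<beta> j \<Longrightarrow> S j (x + 1) = T j (x + 1)"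
    using assms(2) by (auto simp: is_box_def)
  then show ?thesis
    unfolding t increasing_triple_def by (cases "x = \<alpha> j"; cases "x = \<beta> j") simp_all
qed

lemma h_w0_cong:
  assumes "\<And>j x. j \<in> {1..N} \<Longrightarrow> is_box \<alpha> \<beta> j x \<Longrightarrow> S j x = T j x"
  shows "h_w0 N \<alpha> \<beta> S = h_w0 N \<alpha> \<beta> T"
proof -
  have "{t \<in> w0_triples N \<alpha> \<beta>. increasing_triple \<alpha> \<beta> S t}
      = {t \<in> w0_triples N \<alpha> \<beta>. increasing_triple \<alpha> \<beta> T t}"
    using increasing_triple_cong[of _ N \<alpha> \<beta> S T] assms by blast
  then show ?thesis by (simp add: h_w0_def)
qed

lemma finite_w0_triples: "finite (w0_triples N \<alpha> \<beta>)"
proof (rule finite_subset)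
  show "w0_triples N \<alpha> \<beta> \<subseteq> {1..N} \<times> {..Max (\<beta> ` {1..N})} \<times> {1..N}"
  proof
    fix t assume "t \<in> w0_triples N \<alpha> \<beta>"
    then obtain r x j where "t = (r, x, j)" "r \<in> {1..N}" "j \<in> {1..N}" "x \<le> \<beta> r"
      unfolding w0_triples_def is_box_def by auto
    moreover have "x \<le> Max (\<beta> ` {1..N})"
      using \<open>r \<in> {1..N}\<close> \<open>x \<le> \<beta> r\<close> by (auto simp: Max_ge_iff)
    ultimately show "t \<in> {1..N} \<times> {..Max (\<beta> ` {1..N})} \<times> {1..N}" by simp
  qed
qed auto

lemma row_strict_zero_at_first_box:
  fixes S :: "nat \<Rightarrow> nat \<Rightarrow> nat"
  assumes "row_strict N \<alpha> \<beta> S" "j \<in> {1..N}" "is_box \<alpha> \<beta> j x" "S j x = 0"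
  shows "x = \<alpha> j + 1"
proof (rule ccontr)
  assume "x \<noteq> \<alpha> j + 1"
  with assms(3) have "\<alpha> j < \<alpha> j + 1" "\<alpha> j + 1 < x" "x \<le> \<beta> j"
    unfolding is_box_def by auto
  with assms(1,2) have "S j (\<alpha> j + 1) < S j x"
    unfolding row_strict_def by blast
  with assms(4) show False by simp
qed

definition h_I_pairs :: "nat \<Rightarrow> nat set \<Rightarrow> (nat \<Rightarrow> nat) \<Rightarrow> (nat \<times> nat) set" where
  "h_I_pairs N I \<alpha> = {(r, s). 1 \<le> r \<and> r < s \<and> s \<le> N \<and> r \<in> I \<and> s \<notin> I \<and> \<alpha> s = \<alpha> r + 1}"

lemma finite_h_I_pairs: "finite (h_I_pairs N I \<alpha>)"
  by (rule finite_subset[of _ "{..N} \<times> {..N}"]) (auto simp: h_I_pairs_def)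

locale zero_deletion =
  fixes N :: nat and \<alpha> \<beta> :: "nat \<Rightarrow> nat" and S :: "nat \<Rightarrow> nat \<Rightarrow> nat" and I :: "nat set"
  assumes alpha_le_beta: "\<forall>j\<in>{1..N}. \<alpha> j \<le> \<beta> j"
    and row_strict: "row_strict N \<alpha> \<beta> S"
    and I_eq: "I = {j \<in> {1..N}. \<exists>x. is_box \<alpha> \<beta> j x \<and> S j x = 0}"
begin

lemma mem_I_iff: "j \<in> I \<longleftrightarrow> j \<in> {1..N} \<and> \<alpha> j < \<beta> j \<and> S j (\<alpha> j + 1) = 0"
  using row_strict_zero_at_first_box[OF row_strict] unfolding I_eq is_box_def by force

lemma entry_pos:
  assumes "j \<in> {1..N}" "is_box (add_eps \<alpha> I) \<beta> j x"
  shows "0 < S j x"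
proof (rule ccontr)
  assume "\<not> 0 < S j x"
  moreover have "is_box \<alpha> \<beta> j x"
    using assms(2) by (auto simp: is_box_def add_eps_def split: if_splits)
  ultimately have "j \<in> I" "x = \<alpha> j + 1"
    using assms(1) row_strict_zero_at_first_box[OF row_strict] unfolding I_eq by auto
  with assms(2) show False by (simp add: is_box_def add_eps_def)
qed

lemma increasing_triple_add_eps_iff:
  assumes rj: "r \<in> {1..N}" "j \<in> {1..N}" "r < j"
    and v: "is_box (add_eps \<alpha> I) \<beta> r x" and u: "\<alpha> j \<le> x" "x \<le> \<beta> j"
  shows "(r, x, j) \<in> w0_triples N (add_eps \<alpha> I) \<beta> \<and> increasing_triple (add_eps \<alpha> I) \<beta> S (r, x, j)
     \<longleftrightarrow> increasing_triple \<alpha> \<beta> S (r, x, j)"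
proof -
  have Sv: "0 < S r x" using entry_pos[OF rj(1) v] .
  have "add_eps \<alpha> I j \<le> x" if "increasing_triple \<alpha> \<beta> S (r, x, j)"
  proof (rule ccontr)
    assume "\<not> add_eps \<alpha> I j \<le> x"
    then have "j \<in> I" "x = \<alpha> j" using u by (auto simp: add_eps_def split: if_splits)
    then have "x \<noteq> \<beta> j" "S j (x + 1) = 0" using mem_I_iff by auto
    with that show False by (simp add: increasing_triple_def)
  qed
  moreover have "x = \<alpha> j \<or> S j x < S r x \<longleftrightarrow> x = add_eps \<alpha> I j \<or> S j x < S r x"
    if "add_eps \<alpha> I j \<le> x"
    using that Sv mem_I_iff[of j] by (auto simp: add_eps_def split: if_splits)
  ultimately show ?thesis
    using rj v u unfolding w0_triples_def increasing_triple_def by auto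
qed

lemma increasing_zero_triple_iff:
  assumes "r \<in> I" "j \<in> {1..N}" "\<alpha> j \<le> \<alpha> r + 1" "\<alpha> r + 1 \<le> \<beta> j"
  shows "increasing_triple \<alpha> \<beta> S (r, \<alpha> r + 1, j) \<longleftrightarrow> \<alpha> j = \<alpha> r + 1 \<and> j \<notin> I"
proof -
  have Sv: "S r (\<alpha> r + 1) = 0" using assms(1) mem_I_iff by auto
  have "0 < S j (\<alpha> j + 2)" if "j \<notin> I" "\<alpha> j + 1 < \<beta> j"
    using entry_pos[OF assms(2)] that by (simp add: is_box_def add_eps_def)
  then show ?thesis
    using assms Sv mem_I_iff[of j] by (auto simp: increasing_triple_def)
qed

definition zero_triples :: "(nat \<times> nat \<times> nat) set" where
  "zero_triples = (\<lambda>(r, s). (r, \<alpha> r + 1, s)) ` h_I_pairs N I \<alpha>"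

lemma increasing_triples_split:
  "{t \<in> w0_triples N \<alpha> \<beta>. increasing_triple \<alpha> \<beta> S t}
     = {t \<in> w0_triples N (add_eps \<alpha> I) \<beta>. increasing_triple (add_eps \<alpha> I) \<beta> S t} \<union> zero_triples"
proof (intro set_eqI iffI)
  fix t assume t: "t \<in> {t \<in> w0_triples N \<alpha> \<beta>. increasing_triple \<alpha> \<beta> S t}"
  obtain r x j where [simp]: "t = (r, x, j)" by (cases t)
  from t have w: "r \<in> {1..N}" "j \<in> {1..N}" "r < j" "is_box \<alpha> \<beta> r x" "\<alpha> j \<le> x" "x \<le> \<beta> j"
    and inc: "increasing_triple \<alpha> \<beta> S (r, x, j)"
    unfolding w0_triples_def by auto
  show "t \<in> {t \<in> w0_triples N (add_eps \<alpha> I) \<beta>. increasing_triple (add_eps \<alpha> I) \<beta> S t}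
      \<union> zero_triples"
  proof (cases "r \<in> I \<and> x = \<alpha> r + 1")
    case True
    with w inc increasing_zero_triple_iff have "(r, j) \<in> h_I_pairs N I \<alpha>"
      by (auto simp: h_I_pairs_def)
    with True show ?thesis by (force simp: zero_triples_def)
  next
    case False
    with w have "is_box (add_eps \<alpha> I) \<beta> r x" by (auto simp: is_box_def add_eps_def)
    with w inc increasing_triple_add_eps_iff show ?thesis by auto
  qed
next
  fix t assume t: "t \<in> {t \<in> w0_triples N (add_eps \<alpha> I) \<beta>. increasing_triple (add_eps \<alpha> I) \<beta> S t}
      \<union> zero_triples"
  obtain r x j where [simp]: "t = (r, x, j)" by (cases t)
  show "t \<in> {t \<in> w0_triples N \<alpha> \<beta>. increasing_triple \<alpha> \<beta> S t}"
  proof (cases "t \<in> zero_triples")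
    case True
    then have p: "(r, j) \<in> h_I_pairs N I \<alpha>" "x = \<alpha> r + 1"
      by (auto simp: zero_triples_def)
    then have r: "r \<in> I" and j: "j \<in> {1..N}" "j \<notin> I" "r < j" and aj: "\<alpha> j = \<alpha> r + 1"
      by (auto simp: h_I_pairs_def)
    have "r \<in> {1..N}" "\<alpha> r < \<beta> r" using r mem_I_iff by auto
    moreover have "\<alpha> r + 1 \<le> \<beta> j" using bspec[OF alpha_le_beta j(1)] aj by simp
    moreover from this have "increasing_triple \<alpha> \<beta> S (r, x, j)"
      using increasing_zero_triple_iff[OF r j(1)] p(2) aj j(2) by simp
    ultimately show ?thesis using p(2) j aj by (auto simp: w0_triples_def is_box_def)
  next
    case False
    with t have w: "r \<in> {1..N}" "j \<in> {1..N}" "r < j" "is_box (add_eps \<alpha> I) \<beta> r x"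
        "add_eps \<alpha> I j \<le> x" "x \<le> \<beta> j"
      and inc: "increasing_triple (add_eps \<alpha> I) \<beta> S (r, x, j)"
      unfolding w0_triples_def by auto
    moreover have "\<alpha> j \<le> x" "is_box \<alpha> \<beta> r x"
      using w by (auto simp: is_box_def add_eps_def split: if_splits)
    ultimately show ?thesis
      using increasing_triple_add_eps_iff[of r j x] t by (auto simp: w0_triples_def)
  qed
qed

lemma zero_triples_disjoint:
  "{t \<in> w0_triples N (add_eps \<alpha> I) \<beta>. increasing_triple (add_eps \<alpha> I) \<beta> S t} \<inter> zero_triples = {}"
  by (auto simp: zero_triples_def h_I_pairs_def w0_triples_def is_box_def add_eps_def)

lemma card_zero_triples: "card zero_triples = h_I N I \<alpha>"
  unfolding zero_triples_def h_I_def h_I_pairs_def[symmetric]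
  by (rule card_image) (auto simp: inj_on_def)

lemma h_w0_delete_zeros: "h_w0 N \<alpha> \<beta> S = h_w0 N (add_eps \<alpha> I) \<beta> S + h_I N I \<alpha>"
  unfolding h_w0_def increasing_triples_split card_zero_triples[symmetric]
  using finite_w0_triples finite_h_I_pairs zero_triples_disjoint
  by (intro card_Un_disjoint) (auto simp: zero_triples_def)

end

theorem lemma5p3p3:
  fixes N :: nat and \<alpha> \<beta> :: "nat \<Rightarrow> nat" and S T :: "nat \<Rightarrow> nat \<Rightarrow> nat" and I :: "nat set"
  assumes le: "\<forall>j\<in>{1..N}. \<alpha> j \<le> \<beta> j"
    and S_rs: "row_strict N \<alpha> \<beta> S"
    and I_def: "I = {j \<in> {1..N}. \<exists>x. is_box \<alpha> \<beta> j x \<and> S j x = 0}"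
    and T_rs: "row_strict N (add_eps \<alpha> I) \<beta> T"
    and T_pos: "\<forall>j\<in>{1..N}. \<forall>x. is_box (add_eps \<alpha> I) \<beta> j x \<longrightarrow> T j x > 0"
    and T_S: "\<forall>j\<in>{1..N}. \<forall>x. is_box (add_eps \<alpha> I) \<beta> j x \<longrightarrow> T j x = S j x"
  shows "int (h_w0 N (add_eps \<alpha> I) \<beta> T) = int (h_w0 N \<alpha> \<beta> S) - int (h_I N I \<alpha>)"
proof -
  interpret zero_deletion N \<alpha> \<beta> S I
    using le S_rs I_def by unfold_locales
  have "h_w0 N (add_eps \<alpha> I) \<beta> T = h_w0 N (add_eps \<alpha> I) \<beta> S"
    using T_S by (intro h_w0_cong) auto
  then show ?thesis using h_w0_delete_zeros by simp
qed

end
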